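(* Consider Picard's case of the sixth Painlevé equation, $\ddot q=\frac12\left(\frac1q+\frac1{q-1}+\frac1{q-t}\right)\dot q^2-\left(\frac1t+\frac1{t-1}+\frac1{q-t}\right)\dot q+\frac{q(q-1)(q-t)}{t^2(t-1)^2}\cdot\frac12\cdot\frac{t(t-1)}{(q-t)^2}$ (i.e. $\alpha=\beta=\gamma=0$, $\delta=\frac12$). Parametrize the independent variable by $s\in\mathbb C$ via $t=\frac{s^3(s+2)}{2s+1}$. Then the transformation $(q,t)\mapsto(\tilde q,\tilde t)$, $$\tilde t=\frac{s(s+2)^3}{(2s+1)^3},\qquad \tilde q=\frac{q\,(q+s(s+2))^2}{((2s+1)q+s^2)^2},$$ preserves this equation: if $q(t)$ is a solution, then $\tilde q$, regarded as a function of $\tilde t$, is again a solution of the same equation. *)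

theory Defs
  imports "HOL-Complex_Analysis.Complex_Analysis"
begin

definition PVI_rhs :: "complex \<Rightarrow> complex \<Rightarrow> complex \<Rightarrow> complex \<Rightarrow> complex \<Rightarrow> complex \<Rightarrow> complex \<Rightarrow> complex" where
  "PVI_rhs \<alpha> \<beta> \<gamma> \<delta> t q p =
     1/2 * (1/q + 1/(q - 1) + 1/(q - t)) * p^2
     - (1/t + 1/(t - 1) + 1/(q - t)) * p
     + q * (q - 1) * (q - t) / (t^2 * (t - 1)^2)
       * (\<alpha> + \<beta> * t / q^2 + \<gamma> * (t - 1) / (q - 1)^2 + \<delta> * t * (t - 1) / (q - t)^2)"

definition PVI_solution_on ::
  "complex \<Rightarrow> complex \<Rightarrow> complex \<Rightarrow> complex \<Rightarrow> (complex \<Rightarrow> complex) \<Rightarrow> complex set \<Rightarrow> bool" where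
  "PVI_solution_on \<alpha> \<beta> \<gamma> \<delta> f V \<longleftrightarrow>
     open V \<and> f holomorphic_on V \<and>
     (\<forall>t\<in>V. t \<noteq> 0 \<and> t \<noteq> 1 \<and> f t \<noteq> 0 \<and> f t \<noteq> 1 \<and> f t \<noteq> t \<and>
        deriv (deriv f) t = PVI_rhs \<alpha> \<beta> \<gamma> \<delta> t (f t) (deriv f t))"

abbreviation Picard_solution_on :: "(complex \<Rightarrow> complex) \<Rightarrow> complex set \<Rightarrow> bool" where
  "Picard_solution_on f V \<equiv> PVI_solution_on 0 0 0 (1/2) f V"

definition t_of_s :: "complex \<Rightarrow> complex" where
  "t_of_s s = s^3 * (s + 2) / (2 * s + 1)"

definition tt_of_s :: "complex \<Rightarrow> complex" where
  "tt_of_s s = s * (s + 2)^3 / (2 * s + 1)^3"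

definition qt_of :: "complex \<Rightarrow> complex \<Rightarrow> complex" where
  "qt_of s q = q * (q + s*(s + 2))^2 / ((2 * s + 1) * q + s^2)^2"

end

theory Submission
  imports Defs
begin

(* In the parameter s all data are rational: put x(s) = q(t(s)) and Q(s) = qt_of s (x(s)); since
   tt_of_s has nonzero derivative at s0, g := Q o tt_of_s^-1 exists near tt_of_s s0.
   Picard's equation reads q'' = A2(t,q) q'^2 + A1(t,q) q' + A0(t,q), and a change of the
   independent variable preserves this shape.  Hence x and Q satisfy, in the variable s, equations
   quadratic in the first derivative, and the point transformation (s, x) |-> (s, qt_of s x) maps
   the first to the second as soon as three rational identities in s and q hold, one for each power
   of x'.  The leading one is the logarithmic q-derivative of the relation
     (d qt_of / dq)^2 q (q - 1) (q - t) = (2s + 1)^2 Q (Q - 1) (Q - tt),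
   so qt_of pulls the invariant differential of the Legendre curve with parameter tt back to a
   multiple of that of the curve with parameter t. *)

(* With w = u o phi, (w1, w2) and (u1, u2) are the first two derivatives of w and u and
   (phi1, phi2) those of phi. *)
lemma quadratic_ode_reparametrize:
  fixes u1 u2 w1 w2 \<phi>1 \<phi>2 A2 A1 A0 :: "'a::field"
  assumes "\<phi>1 \<noteq> 0" "w1 = u1 * \<phi>1" "w2 = u2 * \<phi>1^2 + u1 * \<phi>2"
  shows "u2 = A2 * u1^2 + A1 * u1 + A0 \<longleftrightarrow>
         w2 = A2 * w1^2 + (A1 * \<phi>1 + \<phi>2 / \<phi>1) * w1 + A0 * \<phi>1^2"
proof -
  have "w2 - (A2 * w1^2 + (A1 * \<phi>1 + \<phi>2 / \<phi>1) * w1 + A0 * \<phi>1^2)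
      = \<phi>1^2 * (u2 - (A2 * u1^2 + A1 * u1 + A0))"
    using assms by (simp add: field_simps power2_eq_square)
  then show ?thesis
    using assms(1) by (metis eq_iff_diff_eq_0 mult_eq_0_iff zero_eq_power2)
qed

(* Second derivative of s |-> F(s, x(s)) for a solution x of x'' = a2 x'^2 + a1 x' + a0;
   Fx, Fs, Fxx, Fxs, Fss are the partial derivatives of F at (s, x(s)) and x1 = x'(s). *)
lemma quadratic_ode_point_transform:
  fixes Fx Fs Fxx Fxs Fss a2 a1 a0 b2 b1 b0 x1 x2 :: "'a::comm_ring_1"
  assumes "Fxx + Fx * a2 = b2 * Fx^2"
    and "2 * Fxs + Fx * a1 = 2 * b2 * Fx * Fs + b1 * Fx"
    and "Fss + Fx * a0 = b2 * Fs^2 + b1 * Fs + b0"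
    and "x2 = a2 * x1^2 + a1 * x1 + a0"
  shows "Fxx * x1^2 + 2 * Fxs * x1 + Fss + Fx * x2 = b2 * (Fx * x1 + Fs)^2 + b1 * (Fx * x1 + Fs) + b0"
proof -
  have "Fxx * x1^2 + 2 * Fxs * x1 + Fss + Fx * x2 - (b2 * (Fx * x1 + Fs)^2 + b1 * (Fx * x1 + Fs) + b0)
      = x1^2 * (Fxx + Fx * a2 - b2 * Fx^2) + x1 * (2 * Fxs + Fx * a1 - (2 * b2 * Fx * Fs + b1 * Fx))
        + (Fss + Fx * a0 - (b2 * Fs^2 + b1 * Fs + b0)) + Fx * (x2 - (a2 * x1^2 + a1 * x1 + a0))"
    by (simp add: algebra_simps power2_eq_square)
  then show ?thesis using assms by simp
qed

lemma continuous_on_open_Collect_neq: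
  fixes f :: "'a::topological_space \<Rightarrow> 'b::t1_space"
  assumes "open S" "continuous_on S f"
  shows "open {s \<in> S. f s \<noteq> c}"
proof -
  have "{s \<in> S. f s \<noteq> c} = S \<inter> f -` (- {c})" by auto
  then show ?thesis using continuous_open_preimage[OF assms(2,1) open_Compl[OF closed_singleton]] by simp
qed

lemma holomorphic_factor_through_local_inverse:
  assumes "\<phi> holomorphic_on W" "F holomorphic_on W" "open W" "s0 \<in> W" "deriv \<phi> s0 \<noteq> 0"
  obtains S g where "open S" "s0 \<in> S" "S \<subseteq> W" "open (\<phi> ` S)" "g holomorphic_on \<phi> ` S"
    "\<And>s. s \<in> S \<Longrightarrow> g (\<phi> s) = F s"
proof -
  obtain r where r: "r > 0" "ball s0 r \<subseteq> W" "inj_on \<phi> (ball s0 r)"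
    using has_complex_derivative_locally_injective assms by metis
  have hol: "\<phi> holomorphic_on ball s0 r" using assms(1) r(2) by (rule holomorphic_on_subset)
  obtain \<psi> where \<psi>: "\<psi> holomorphic_on \<phi> ` ball s0 r" "\<And>s. s \<in> ball s0 r \<Longrightarrow> \<psi> (\<phi> s) = s"
    using holomorphic_has_inverse[OF hol open_ball r(3)] by metis
  have "(F \<circ> \<psi>) holomorphic_on \<phi> ` ball s0 r"
    using r(2) \<psi> by (intro holomorphic_on_compose_gen[OF \<psi>(1) assms(2)]) auto
  then show ?thesis
    using that[of "ball s0 r" "F \<circ> \<psi>"] r open_mapping_thm3[OF hol open_ball r(3)] \<psi>(2) by simp
qed

lemma deriv_of_composition_identity:
  fixes g \<phi> F \<phi>1 F1 :: "complex \<Rightarrow> complex"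
  assumes S: "open S" "z \<in> S" and g: "open V" "g holomorphic_on V" "\<phi> ` S \<subseteq> V"
    and eq: "\<And>s. s \<in> S \<Longrightarrow> g (\<phi> s) = F s"
    and \<phi>: "\<And>s. s \<in> S \<Longrightarrow> (\<phi> has_field_derivative \<phi>1 s) (at s)" "(\<phi>1 has_field_derivative \<phi>2) (at z)"
    and F: "\<And>s. s \<in> S \<Longrightarrow> (F has_field_derivative F1 s) (at s)" "(F1 has_field_derivative F2) (at z)"
  shows "deriv g (\<phi> z) * \<phi>1 z = F1 z"
    and "deriv (deriv g) (\<phi> z) * \<phi>1 z ^ 2 + deriv g (\<phi> z) * \<phi>2 = F2"
proof -
  have first: "deriv g (\<phi> s) * \<phi>1 s = F1 s" if "s \<in> S" for s
  proof -
    have "((\<lambda>s. g (\<phi> s)) has_field_derivative deriv g (\<phi> s) * \<phi>1 s) (at s)"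
      using DERIV_chain2[OF holomorphic_derivI[OF g(2,1)] \<phi>(1)] that g(3) by blast
    then have "(F has_field_derivative deriv g (\<phi> s) * \<phi>1 s) (at s)"
      using has_field_derivative_transform_within_open[OF _ S(1) that] eq by blast
    then show ?thesis using F(1)[OF that] DERIV_unique by blast
  qed
  then show "deriv g (\<phi> z) * \<phi>1 z = F1 z" using S(2) .
  have "((\<lambda>s. deriv g (\<phi> s) * \<phi>1 s) has_field_derivative
      deriv (deriv g) (\<phi> z) * \<phi>1 z * \<phi>1 z + deriv g (\<phi> z) * \<phi>2) (at z)"
    using S(2) g(3) by (auto intro!: derivative_eq_intros DERIV_chain2[OF holomorphic_derivI[OF
          holomorphic_deriv[OF g(2,1)] g(1)]] \<phi>)
  then have "(F1 has_field_derivative deriv (deriv g) (\<phi> z) * \<phi>1 z * \<phi>1 z + deriv g (\<phi> z) * \<phi>2) (at z)"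
    using has_field_derivative_transform_within_open[OF _ S] first by blast
  then show "deriv (deriv g) (\<phi> z) * \<phi>1 z ^ 2 + deriv g (\<phi> z) * \<phi>2 = F2"
    using F(2) DERIV_unique by (metis power2_eq_square mult.assoc)
qed

definition PVI_regular :: "complex \<Rightarrow> complex \<Rightarrow> bool" where
  "PVI_regular t q \<longleftrightarrow> t \<noteq> 0 \<and> t \<noteq> 1 \<and> q \<noteq> 0 \<and> q \<noteq> 1 \<and> q \<noteq> t"

lemma PVI_solution_on_iff:
  "PVI_solution_on \<alpha> \<beta> \<gamma> \<delta> f V \<longleftrightarrow> open V \<and> f holomorphic_on V \<and>
     (\<forall>t\<in>V. PVI_regular t (f t) \<and> deriv (deriv f) t = PVI_rhs \<alpha> \<beta> \<gamma> \<delta> t (f t) (deriv f t))"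
  by (simp add: PVI_solution_on_def PVI_regular_def conj_assoc)

definition Picard_A2 :: "complex \<Rightarrow> complex \<Rightarrow> complex" where
  "Picard_A2 t q = (1/q + 1/(q - 1) + 1/(q - t)) / 2"

definition Picard_A1 :: "complex \<Rightarrow> complex \<Rightarrow> complex" where
  "Picard_A1 t q = - (1/t + 1/(t - 1) + 1/(q - t))"

definition Picard_A0 :: "complex \<Rightarrow> complex \<Rightarrow> complex" where
  "Picard_A0 t q = q * (q - 1) / (2 * t * (t - 1) * (q - t))"

lemma PVI_rhs_Picard:
  assumes "t \<noteq> 0" "t \<noteq> 1" "q \<noteq> t"
  shows "PVI_rhs 0 0 0 (1/2) t q p = Picard_A2 t q * p^2 + Picard_A1 t q * p + Picard_A0 t q"
proof -
  have "PVI_rhs 0 0 0 (1/2) t q p = Picard_A2 t q * p^2 + Picard_A1 t q * p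
      + q * (q - 1) * (q - t) / (t^2 * (t - 1)^2) * (1/2 * t * (t - 1) / (q - t)^2)"
    by (simp add: PVI_rhs_def Picard_A2_def Picard_A1_def) (simp add: algebra_simps)
  also have "q * (q - 1) * (q - t) / (t^2 * (t - 1)^2) * (1/2 * t * (t - 1) / (q - t)^2) = Picard_A0 t q"
    using assms by (simp add: Picard_A0_def divide_simps) algebra
  finally show ?thesis .
qed

lemma t_of_s_minus_1: "2 * s + 1 \<noteq> 0 \<Longrightarrow> t_of_s s - 1 = (s - 1) * (s + 1)^3 / (2 * s + 1)"
  unfolding t_of_s_def by (simp add: divide_simps) algebra

lemma tt_of_s_minus_1: "2 * s + 1 \<noteq> 0 \<Longrightarrow> tt_of_s s - 1 = (s - 1)^3 * (s + 1) / (2 * s + 1)^3"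
  unfolding tt_of_s_def by (simp add: divide_simps) algebra

definition t_of_s' :: "complex \<Rightarrow> complex" where
  "t_of_s' s = 6 * s^2 * (s + 1)^2 / (2 * s + 1)^2"

definition t_of_s'' :: "complex \<Rightarrow> complex" where
  "t_of_s'' s = 12 * s * (s + 1) * (2 * s^2 + 2 * s + 1) / (2 * s + 1)^3"

definition tt_of_s' :: "complex \<Rightarrow> complex" where
  "tt_of_s' s = 2 * (s + 2)^2 * (s - 1)^2 / (2 * s + 1)^4"

definition tt_of_s'' :: "complex \<Rightarrow> complex" where
  "tt_of_s'' s = 36 * (s + 2) * (s - 1) / (2 * s + 1)^5"

lemma has_field_derivative_t_of_s: "2 * s + 1 \<noteq> 0 \<Longrightarrow> (t_of_s has_field_derivative t_of_s' s) (at s)"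
  unfolding t_of_s_def[abs_def] t_of_s'_def
  by (rule derivative_eq_intros refl | simp)+ (simp add: divide_simps, algebra)

lemma has_field_derivative_t_of_s': "2 * s + 1 \<noteq> 0 \<Longrightarrow> (t_of_s' has_field_derivative t_of_s'' s) (at s)"
  unfolding t_of_s'_def[abs_def] t_of_s''_def
  by (rule derivative_eq_intros refl | simp)+ (simp add: divide_simps, algebra)

lemma has_field_derivative_tt_of_s: "2 * s + 1 \<noteq> 0 \<Longrightarrow> (tt_of_s has_field_derivative tt_of_s' s) (at s)"
  unfolding tt_of_s_def[abs_def] tt_of_s'_def
  by (rule derivative_eq_intros refl | simp)+ (simp add: divide_simps, algebra)

lemma has_field_derivative_tt_of_s': "2 * s + 1 \<noteq> 0 \<Longrightarrow> (tt_of_s' has_field_derivative tt_of_s'' s) (at s)"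
  unfolding tt_of_s'_def[abs_def] tt_of_s''_def
  by (rule derivative_eq_intros refl | simp)+ (simp add: divide_simps, algebra)

definition qt_dq :: "complex \<Rightarrow> complex \<Rightarrow> complex" where
  "qt_dq s q = (q + s * (s + 2)) * (q - s^2) * ((2 * s + 1) * q - s * (s + 2)) / ((2 * s + 1) * q + s^2)^3"

definition qt_ds :: "complex \<Rightarrow> complex \<Rightarrow> complex" where
  "qt_ds s q = - 4 * q * (q - 1) * (q + s * (s + 2)) * (q - s^2) / ((2 * s + 1) * q + s^2)^3"

definition qt_dqq :: "complex \<Rightarrow> complex \<Rightarrow> complex" where
  "qt_dqq s q =
     (((q - s^2) * ((2 * s + 1) * q - s * (s + 2)) + (q + s * (s + 2)) * ((2 * s + 1) * q - s * (s + 2))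
        + (2 * s + 1) * (q + s * (s + 2)) * (q - s^2)) * ((2 * s + 1) * q + s^2)
      - 3 * (2 * s + 1) * (q + s * (s + 2)) * (q - s^2) * ((2 * s + 1) * q - s * (s + 2)))
     / ((2 * s + 1) * q + s^2)^4"

definition qt_dqs :: "complex \<Rightarrow> complex \<Rightarrow> complex" where
  "qt_dqs s q =
     ((2 * (s + 1) * (q - s^2) * ((2 * s + 1) * q - s * (s + 2))
        - 2 * s * (q + s * (s + 2)) * ((2 * s + 1) * q - s * (s + 2))
        + 2 * (q - s - 1) * (q + s * (s + 2)) * (q - s^2)) * ((2 * s + 1) * q + s^2)
      - 6 * (q + s) * (q + s * (s + 2)) * (q - s^2) * ((2 * s + 1) * q - s * (s + 2)))
     / ((2 * s + 1) * q + s^2)^4"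

definition qt_dss :: "complex \<Rightarrow> complex \<Rightarrow> complex" where
  "qt_dss s q =
     - 4 * q * (q - 1) * ((2 * (s + 1) * (q - s^2) - 2 * s * (q + s * (s + 2))) * ((2 * s + 1) * q + s^2)
        - 6 * (q + s) * (q + s * (s + 2)) * (q - s^2))
     / ((2 * s + 1) * q + s^2)^4"

lemma qt_of_chain_rule:
  assumes "(x has_field_derivative x1) (at z)" "(2 * z + 1) * x z + z^2 \<noteq> 0"
  shows "((\<lambda>s. qt_of s (x s)) has_field_derivative qt_dq z (x z) * x1 + qt_ds z (x z)) (at z)"
  unfolding qt_of_def qt_dq_def qt_ds_def
  by (rule derivative_eq_intros assms refl | simp add: assms)+ (simp add: divide_simps assms, algebra)

lemma qt_dq_chain_rule:
  assumes "(x has_field_derivative x1) (at z)" "(2 * z + 1) * x z + z^2 \<noteq> 0"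
  shows "((\<lambda>s. qt_dq s (x s)) has_field_derivative qt_dqq z (x z) * x1 + qt_dqs z (x z)) (at z)"
  unfolding qt_dq_def qt_dqq_def qt_dqs_def
  by (rule derivative_eq_intros assms refl | simp add: assms)+ (simp add: divide_simps assms, algebra)

lemma qt_ds_chain_rule:
  assumes "(x has_field_derivative x1) (at z)" "(2 * z + 1) * x z + z^2 \<noteq> 0"
  shows "((\<lambda>s. qt_ds s (x s)) has_field_derivative qt_dqs z (x z) * x1 + qt_dss z (x z)) (at z)"
  unfolding qt_ds_def qt_dqs_def qt_dss_def
  by (rule derivative_eq_intros assms refl | simp add: assms)+ (simp add: divide_simps assms, algebra)

context
  fixes s q D E G H X :: complex
  defines D_def: "D \<equiv> (2 * s + 1) * q + s^2" and E_def: "E \<equiv> q + s * (s + 2)"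
    and G_def: "G \<equiv> q - s^2" and H_def: "H \<equiv> (2 * s + 1) * q - s * (s + 2)"
    and X_def: "X \<equiv> (2 * s + 1) * q - s^3 * (s + 2)"
  assumes a_ne: "2 * s + 1 \<noteq> 0"
    and D_ne: "D \<noteq> 0"
    and tt'_ne: "tt_of_s' s \<noteq> 0"
    and regular: "PVI_regular (t_of_s s) q"
    and regular_tt: "PVI_regular (tt_of_s s) (qt_of s q)"
begin

(* The proofs below clear denominators with the factors D, E, G, H, X kept as atoms, and expand
   them only in the resulting polynomial identities: clearing with the expanded factors produces
   powers such as D^13 that are far beyond the reach of the ring normaliser. *)

private lemma diff_t_of_s_factored: "q - t_of_s s = X / (2 * s + 1)"
  unfolding t_of_s_def X_def using a_ne by (simp add: divide_simps)

private lemma qt_of_factored: "qt_of s q = q * E^2 / D^2"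
  unfolding qt_of_def D_def E_def ..

private lemma qt_of_minus_1_factored: "qt_of s q - 1 = (q - 1) * G^2 / D^2"
  unfolding qt_of_def using D_ne unfolding D_def E_def G_def by (simp add: divide_simps) algebra

private lemma qt_of_minus_tt_of_s_factored: "qt_of s q - tt_of_s s = X * H^2 / ((2 * s + 1)^3 * D^2)"
  unfolding qt_of_def tt_of_s_def using a_ne D_ne unfolding D_def E_def H_def X_def
  by (simp add: divide_simps) algebra

private lemma Picard_transform_factors_nonzero:
  "s \<noteq> 0" "s + 1 \<noteq> 0" "s + 2 \<noteq> 0" "s \<noteq> 1" "q \<noteq> 0" "q \<noteq> 1"
  "E \<noteq> 0" "G \<noteq> 0" "H \<noteq> 0" "X \<noteq> 0"
proof -
  show "s \<noteq> 0" "q \<noteq> 0" "q \<noteq> 1" using regular by (auto simp: PVI_regular_def t_of_s_def)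
  show "s + 1 \<noteq> 0" using regular t_of_s_minus_1[OF a_ne] by (auto simp: PVI_regular_def)
  show "s + 2 \<noteq> 0" "s \<noteq> 1" using tt'_ne by (auto simp: tt_of_s'_def)
  show "X \<noteq> 0" using regular diff_t_of_s_factored by (auto simp: PVI_regular_def)
  show "E \<noteq> 0" using regular_tt qt_of_factored by (auto simp: PVI_regular_def)
  show "G \<noteq> 0" using regular_tt qt_of_minus_1_factored by (auto simp: PVI_regular_def)
  show "H \<noteq> 0" using regular_tt qt_of_minus_tt_of_s_factored by (auto simp: PVI_regular_def)
qed

private lemmas nz = a_ne D_ne Picard_transform_factors_nonzero

private lemma qt_dq_factored: "qt_dq s q = E * G * H / D^3"
  unfolding qt_dq_def D_def E_def G_def H_def ..

private lemma qt_ds_factored: "qt_ds s q = - 4 * q * (q - 1) * E * G / D^3"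
  unfolding qt_ds_def D_def E_def G_def ..

private lemma qt_dqq_factored:
  "qt_dqq s q = ((G * H + E * H + (2 * s + 1) * E * G) * D - 3 * (2 * s + 1) * E * G * H) / D^4"
  unfolding qt_dqq_def D_def E_def G_def H_def ..

private lemma qt_dqs_factored:
  "qt_dqs s q = ((2 * (s + 1) * G * H - 2 * s * E * H + 2 * (q - s - 1) * E * G) * D - 6 * (q + s) * E * G * H) / D^4"
  unfolding qt_dqs_def D_def E_def G_def H_def ..

private lemma qt_dss_factored:
  "qt_dss s q = - 4 * q * (q - 1) * ((2 * (s + 1) * G - 2 * s * E) * D - 6 * (q + s) * E * G) / D^4"
  unfolding qt_dss_def D_def E_def G_def ..

private lemma Picard_A2_t_factored: "Picard_A2 (t_of_s s) q = (1/q + 1/(q - 1) + (2 * s + 1) / X) / 2"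
  unfolding Picard_A2_def diff_t_of_s_factored by simp

private lemma Picard_A2_tt_factored:
  "Picard_A2 (tt_of_s s) (qt_of s q)
     = (D^2 / (q * E^2) + D^2 / ((q - 1) * G^2) + (2 * s + 1)^3 * D^2 / (X * H^2)) / 2"
  unfolding Picard_A2_def qt_of_minus_1_factored qt_of_minus_tt_of_s_factored
  unfolding qt_of_factored by simp

private lemma Picard_A1_t_factored:
  "Picard_A1 (t_of_s s) q * t_of_s' s + t_of_s'' s / t_of_s' s
     = - 2 * (2 * s^3 + 3 * s^2 - s - 1) / (s * (s + 2) * (s - 1) * (s + 1)) - 6 * s^2 * (s + 1)^2 / ((2 * s + 1) * X)"
  unfolding Picard_A1_def diff_t_of_s_factored t_of_s_minus_1[OF a_ne]
  unfolding t_of_s_def t_of_s'_def t_of_s''_def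
  by (simp add: divide_simps nz) algebra

private lemma Picard_A1_tt_factored:
  "Picard_A1 (tt_of_s s) (qt_of s q) * tt_of_s' s + tt_of_s'' s / tt_of_s' s
     = - 2 * (2 * s^4 + 4 * s^3 + 3 * s^2 + s - 1) / ((2 * s + 1) * s * (s + 2) * (s - 1) * (s + 1))
       - 2 * (s + 2)^2 * (s - 1)^2 * D^2 / ((2 * s + 1) * X * H^2)"
  unfolding Picard_A1_def qt_of_minus_tt_of_s_factored tt_of_s_minus_1[OF a_ne]
  unfolding tt_of_s_def tt_of_s'_def tt_of_s''_def
  by (simp add: divide_simps nz) algebra

private lemma Picard_A0_t_factored:
  "Picard_A0 (t_of_s s) q * t_of_s' s ^ 2 = 18 * s * (s + 1) * q * (q - 1) / ((2 * s + 1) * (s + 2) * (s - 1) * X)"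
  unfolding Picard_A0_def diff_t_of_s_factored t_of_s_minus_1[OF a_ne]
  unfolding t_of_s_def t_of_s'_def
  by (simp add: divide_simps nz) algebra

private lemma Picard_A0_tt_factored:
  "Picard_A0 (tt_of_s s) (qt_of s q) * tt_of_s' s ^ 2
     = 2 * (2 * s + 1) * (s + 2) * (s - 1) * q * (q - 1) * E^2 * G^2 / (s * (s + 1) * X * H^2 * D^2)"
  unfolding Picard_A0_def qt_of_minus_1_factored qt_of_minus_tt_of_s_factored tt_of_s_minus_1[OF a_ne]
  unfolding qt_of_factored tt_of_s_def tt_of_s'_def
  by (simp add: divide_simps nz) algebra

lemma Picard_transform_coeff2:
  "qt_dqq s q + qt_dq s q * Picard_A2 (t_of_s s) q = Picard_A2 (tt_of_s s) (qt_of s q) * qt_dq s q ^ 2"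
proof -
  have "2 * q * (q - 1) * X * ((G * H + E * H + (2 * s + 1) * E * G) * D - 3 * (2 * s + 1) * E * G * H)
      + E * G * H * D * ((q - 1) * X + q * X + (2 * s + 1) * q * (q - 1))
      = (q - 1) * X * G^2 * H^2 + q * X * E^2 * H^2 + (2 * s + 1)^3 * q * (q - 1) * E^2 * G^2"
    unfolding D_def E_def G_def H_def X_def by algebra
  then show ?thesis
    unfolding qt_dqq_factored qt_dq_factored Picard_A2_t_factored Picard_A2_tt_factored
    by (simp add: divide_simps nz) algebra
qed

lemma Picard_transform_coeff1:
  "2 * qt_dqs s q + qt_dq s q * (Picard_A1 (t_of_s s) q * t_of_s' s + t_of_s'' s / t_of_s' s)
    = 2 * Picard_A2 (tt_of_s s) (qt_of s q) * qt_dq s q * qt_ds s q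
      + (Picard_A1 (tt_of_s s) (qt_of s q) * tt_of_s' s + tt_of_s'' s / tt_of_s' s) * qt_dq s q"
proof -
  have "2 * (2 * s + 1) * s * (s + 2) * (s - 1) * (s + 1) * X * H
        * ((2 * (s + 1) * G * H - 2 * s * E * H + 2 * (q - s - 1) * E * G) * D - 6 * (q + s) * E * G * H)
      = - 4 * (2 * s + 1) * s * (s + 2) * (s - 1) * (s + 1)
          * ((q - 1) * X * G^2 * H^2 + q * X * E^2 * H^2 + (2 * s + 1)^3 * q * (q - 1) * E^2 * G^2)
        - 2 * (2 * s^4 + 4 * s^3 + 3 * s^2 + s - 1) * E * G * H^2 * D * X
        - 2 * s * (s + 2)^3 * (s - 1)^3 * (s + 1) * E * G * D^3
        + 2 * (2 * s + 1) * (2 * s^3 + 3 * s^2 - s - 1) * E * G * H^2 * D * X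
        + 6 * s^3 * (s + 2) * (s - 1) * (s + 1)^3 * E * G * H^2 * D"
    unfolding D_def E_def G_def H_def X_def by algebra
  then show ?thesis
    unfolding qt_dqs_factored qt_dq_factored qt_ds_factored Picard_A2_tt_factored
      Picard_A1_t_factored Picard_A1_tt_factored
    by (simp add: divide_simps nz) algebra
qed

lemma Picard_transform_coeff0:
  "qt_dss s q + qt_dq s q * (Picard_A0 (t_of_s s) q * t_of_s' s ^ 2)
    = Picard_A2 (tt_of_s s) (qt_of s q) * qt_ds s q ^ 2
      + (Picard_A1 (tt_of_s s) (qt_of s q) * tt_of_s' s + tt_of_s'' s / tt_of_s' s) * qt_ds s q
      + Picard_A0 (tt_of_s s) (qt_of s q) * tt_of_s' s ^ 2"
proof -
  have "- 4 * (2 * s + 1) * s * (s + 2) * (s - 1) * (s + 1) * X * H^2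
          * ((2 * (s + 1) * G - 2 * s * E) * D - 6 * (q + s) * E * G)
        + 18 * s^2 * (s + 1)^2 * E * G * H^3 * D
      = 8 * (2 * s + 1) * s * (s + 2) * (s - 1) * (s + 1) * X * H^2 * ((q - 1) * G^2 + q * E^2)
        + 8 * (2 * s + 1)^4 * s * (s + 2) * (s - 1) * (s + 1) * q * (q - 1) * E^2 * G^2
        + 8 * (2 * s^4 + 4 * s^3 + 3 * s^2 + s - 1) * E * G * X * H^2 * D
        + 8 * s * (s + 2)^3 * (s - 1)^3 * (s + 1) * E * G * D^3
        + 2 * (2 * s + 1)^2 * (s + 2)^2 * (s - 1)^2 * E^2 * G^2 * D^2"
    unfolding D_def E_def G_def H_def X_def by algebra
  then show ?thesis
    unfolding qt_dss_factored qt_dq_factored qt_ds_factored Picard_A2_tt_factored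
      Picard_A0_t_factored Picard_A1_tt_factored Picard_A0_tt_factored
    by (simp add: divide_simps nz) algebra
qed

lemma Picard_transform_pointwise:
  assumes q2: "q2 = PVI_rhs 0 0 0 (1/2) (t_of_s s) q q1"
    and g1: "g1 * tt_of_s' s = qt_dq s q * (q1 * t_of_s' s) + qt_ds s q"
    and g2: "g2 * tt_of_s' s ^ 2 + g1 * tt_of_s'' s
      = qt_dqq s q * (q1 * t_of_s' s)^2 + 2 * qt_dqs s q * (q1 * t_of_s' s) + qt_dss s q
        + qt_dq s q * (q2 * t_of_s' s ^ 2 + q1 * t_of_s'' s)"
  shows "g2 = PVI_rhs 0 0 0 (1/2) (tt_of_s s) (qt_of s q) g1"
proof -
  have t'_ne: "t_of_s' s \<noteq> 0" by (simp add: t_of_s'_def nz)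
  have "q2 * t_of_s' s ^ 2 + q1 * t_of_s'' s
      = Picard_A2 (t_of_s s) q * (q1 * t_of_s' s)^2
        + (Picard_A1 (t_of_s s) q * t_of_s' s + t_of_s'' s / t_of_s' s) * (q1 * t_of_s' s)
        + Picard_A0 (t_of_s s) q * t_of_s' s ^ 2"
    using quadratic_ode_reparametrize[OF t'_ne refl refl] q2 regular
    by (simp add: PVI_rhs_Picard PVI_regular_def)
  then have "g2 * tt_of_s' s ^ 2 + g1 * tt_of_s'' s
      = Picard_A2 (tt_of_s s) (qt_of s q) * (g1 * tt_of_s' s)^2
        + (Picard_A1 (tt_of_s s) (qt_of s q) * tt_of_s' s + tt_of_s'' s / tt_of_s' s) * (g1 * tt_of_s' s)
        + Picard_A0 (tt_of_s s) (qt_of s q) * tt_of_s' s ^ 2"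
    unfolding g1 g2
    by (rule quadratic_ode_point_transform[OF Picard_transform_coeff2 Picard_transform_coeff1 Picard_transform_coeff0])
  then show ?thesis
    using quadratic_ode_reparametrize[OF tt'_ne refl refl] regular_tt
    by (simp add: PVI_rhs_Picard PVI_regular_def)
qed

end

definition Picard_transform_domain :: "complex set \<Rightarrow> (complex \<Rightarrow> complex) \<Rightarrow> complex set" where
  "Picard_transform_domain U q =
     {s. 2 * s + 1 \<noteq> 0 \<and> t_of_s s \<in> U \<and> (2 * s + 1) * q (t_of_s s) + s^2 \<noteq> 0 \<and> tt_of_s' s \<noteq> 0 \<and>
         PVI_regular (tt_of_s s) (qt_of s (q (t_of_s s)))}"

lemma open_Picard_transform_domain:
  assumes "open U" "q holomorphic_on U"
  shows "open (Picard_transform_domain U q)"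
proof -
  define A where "A = {s::complex. 2 * s + 1 \<noteq> 0}"
  define W0 where "W0 = A \<inter> t_of_s -` U"
  define W1 where "W1 = {s \<in> W0. (2 * s + 1) * q (t_of_s s) + s^2 \<noteq> 0}"
  have t: "continuous_on A t_of_s"
    unfolding A_def t_of_s_def[abs_def] by (intro continuous_intros) auto
  have A: "open A" unfolding A_def by (intro open_Collect_neq continuous_intros)
  have W0: "open W0" unfolding W0_def using t A assms(1) by (rule continuous_open_preimage)
  have x: "continuous_on W0 (\<lambda>s. q (t_of_s s))"
    by (rule continuous_on_compose2[OF holomorphic_on_imp_continuous_on[OF assms(2)]
          continuous_on_subset[OF t]]) (auto simp: W0_def)
  have W1: "open W1"
    unfolding W1_def using W0 by (rule continuous_on_open_Collect_neq) (intro continuous_intros x)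
  have x1: "continuous_on W1 (\<lambda>s. q (t_of_s s))" by (rule continuous_on_subset[OF x]) (auto simp: W1_def)
  have nz: "2 * s + 1 \<noteq> 0" "(2 * s + 1) * q (t_of_s s) + s^2 \<noteq> 0" if "s \<in> W1" for s
    using that by (auto simp: W1_def W0_def A_def)
  let ?f = "\<lambda>s. tt_of_s' s * tt_of_s s * (tt_of_s s - 1) * qt_of s (q (t_of_s s))
      * (qt_of s (q (t_of_s s)) - 1) * (qt_of s (q (t_of_s s)) - tt_of_s s)"
  have "continuous_on W1 ?f"
    unfolding tt_of_s_def tt_of_s'_def qt_of_def
    by (intro continuous_intros x1) (simp_all add: nz)
  with W1 have "open {s \<in> W1. ?f s \<noteq> 0}" by (rule continuous_on_open_Collect_neq)
  also have "{s \<in> W1. ?f s \<noteq> 0} = Picard_transform_domain U q"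
    unfolding Picard_transform_domain_def W1_def W0_def A_def PVI_regular_def by auto
  finally show ?thesis .
qed

lemma holomorphic_on_Picard_transform:
  assumes "open U" "q holomorphic_on U"
  shows "tt_of_s holomorphic_on Picard_transform_domain U q"
    and "(\<lambda>s. qt_of s (q (t_of_s s))) holomorphic_on Picard_transform_domain U q"
proof -
  have "t_of_s holomorphic_on Picard_transform_domain U q"
    unfolding t_of_s_def[abs_def] Picard_transform_domain_def by (intro holomorphic_intros) auto
  then have "(q \<circ> t_of_s) holomorphic_on Picard_transform_domain U q"
    by (rule holomorphic_on_compose_gen[OF _ assms(2)]) (auto simp: Picard_transform_domain_def)
  then show "(\<lambda>s. qt_of s (q (t_of_s s))) holomorphic_on Picard_transform_domain U q"
    unfolding qt_of_def by (intro holomorphic_intros) (auto simp: Picard_transform_domain_def o_def)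
  show "tt_of_s holomorphic_on Picard_transform_domain U q"
    unfolding tt_of_s_def[abs_def] Picard_transform_domain_def by (intro holomorphic_intros) auto
qed

lemma Picard_transform_solves:
  assumes sol: "Picard_solution_on q U"
    and S: "open S" "S \<subseteq> Picard_transform_domain U q" "z \<in> S"
    and g: "open V" "g holomorphic_on V" "tt_of_s ` S \<subseteq> V"
      "\<And>s. s \<in> S \<Longrightarrow> g (tt_of_s s) = qt_of s (q (t_of_s s))"
  shows "deriv (deriv g) (tt_of_s z) = PVI_rhs 0 0 0 (1/2) (tt_of_s z) (g (tt_of_s z)) (deriv g (tt_of_s z))"
proof -
  have U: "open U" "q holomorphic_on U"
    and eqn: "\<And>t. t \<in> U \<Longrightarrow> PVI_regular t (q t) \<and> deriv (deriv q) t = PVI_rhs 0 0 0 (1/2) t (q t) (deriv q t)"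
    using sol by (auto simp: PVI_solution_on_iff)
  have dom: "2 * s + 1 \<noteq> 0" "t_of_s s \<in> U" "(2 * s + 1) * q (t_of_s s) + s^2 \<noteq> 0" if "s \<in> S" for s
    using S(2) that by (auto simp: Picard_transform_domain_def)
  define x1 where "x1 s = deriv q (t_of_s s) * t_of_s' s" for s
  have dq: "(q has_field_derivative deriv q t) (at t)" "(deriv q has_field_derivative deriv (deriv q) t) (at t)"
    if "t \<in> U" for t
    using that U holomorphic_derivI holomorphic_deriv by blast+
  have dx: "((\<lambda>s. q (t_of_s s)) has_field_derivative x1 s) (at s)" if "s \<in> S" for s
    unfolding x1_def using DERIV_chain2[OF dq(1) has_field_derivative_t_of_s] dom that by blast
  have dx1: "(x1 has_field_derivative
      deriv (deriv q) (t_of_s z) * t_of_s' z ^ 2 + deriv q (t_of_s z) * t_of_s'' z) (at z)"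
    unfolding x1_def using dom[OF S(3)]
    by (auto intro!: derivative_eq_intros DERIV_chain2[OF dq(2)] has_field_derivative_t_of_s
        has_field_derivative_t_of_s' simp: power2_eq_square)
  have dF: "((\<lambda>s. qt_of s (q (t_of_s s))) has_field_derivative
      qt_dq s (q (t_of_s s)) * x1 s + qt_ds s (q (t_of_s s))) (at s)" if "s \<in> S" for s
    using qt_of_chain_rule[OF dx] dom that by blast
  have dF1: "((\<lambda>s. qt_dq s (q (t_of_s s)) * x1 s + qt_ds s (q (t_of_s s))) has_field_derivative
      qt_dqq z (q (t_of_s z)) * x1 z ^ 2 + 2 * qt_dqs z (q (t_of_s z)) * x1 z + qt_dss z (q (t_of_s z))
      + qt_dq z (q (t_of_s z)) * (deriv (deriv q) (t_of_s z) * t_of_s' z ^ 2 + deriv q (t_of_s z) * t_of_s'' z)) (at z)"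
    using dom[OF S(3)]
    by (auto intro!: derivative_eq_intros qt_dq_chain_rule qt_ds_chain_rule dx[OF S(3)] dx1)
      (simp add: algebra_simps power2_eq_square)
  note deriv_eqs = deriv_of_composition_identity[OF S(1,3) g(1,2,3) g(4) has_field_derivative_tt_of_s
      has_field_derivative_tt_of_s'[OF dom(1)[OF S(3)]] dF dF1]
  have "deriv (deriv g) (tt_of_s z) = PVI_rhs 0 0 0 (1/2) (tt_of_s z) (qt_of z (q (t_of_s z))) (deriv g (tt_of_s z))"
    by (rule Picard_transform_pointwise[of z "q (t_of_s z)"])
      (use S(2,3) dom eqn deriv_eqs in \<open>auto simp: Picard_transform_domain_def x1_def\<close>)
  then show ?thesis using g(4)[OF S(3)] by simp
qed

theorem theorem1p4:
  fixes q :: "complex \<Rightarrow> complex" and U :: "complex set" and s0 :: complex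
  assumes sol: "Picard_solution_on q U"
    and s0U: "t_of_s s0 \<in> U"
    and s0_ne: "2 * s0 + 1 \<noteq> 0"
    and den_ne: "(2 * s0 + 1) * q (t_of_s s0) + s0^2 \<noteq> 0"
    and dtt_ne: "deriv tt_of_s s0 \<noteq> 0"
    and tt_ne: "tt_of_s s0 \<noteq> 0" "tt_of_s s0 \<noteq> 1"
    and qt_ne: "qt_of s0 (q (t_of_s s0)) \<noteq> 0" "qt_of s0 (q (t_of_s s0)) \<noteq> 1"
               "qt_of s0 (q (t_of_s s0)) \<noteq> tt_of_s s0"
  shows "\<exists>S g. open S \<and> s0 \<in> S \<and> Picard_solution_on g (tt_of_s ` S) \<and>
           (\<forall>s\<in>S. t_of_s s \<in> U \<and> g (tt_of_s s) = qt_of s (q (t_of_s s)))"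
proof -
  have U: "open U" "q holomorphic_on U" using sol by (simp_all add: PVI_solution_on_iff)
  have "deriv tt_of_s s0 = tt_of_s' s0" by (rule DERIV_imp_deriv[OF has_field_derivative_tt_of_s[OF s0_ne]])
  then have s0W: "s0 \<in> Picard_transform_domain U q"
    using s0U s0_ne den_ne dtt_ne tt_ne qt_ne by (simp add: Picard_transform_domain_def PVI_regular_def)
  obtain S g where S: "open S" "s0 \<in> S" "S \<subseteq> Picard_transform_domain U q" "open (tt_of_s ` S)"
      and g: "g holomorphic_on tt_of_s ` S" "\<And>s. s \<in> S \<Longrightarrow> g (tt_of_s s) = qt_of s (q (t_of_s s))"
    using holomorphic_factor_through_local_inverse[OF holomorphic_on_Picard_transform[OF U]
        open_Picard_transform_domain[OF U] s0W dtt_ne] by metis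
  have "Picard_solution_on g (tt_of_s ` S)"
    unfolding PVI_solution_on_iff
  proof (intro conjI ballI S(4) g(1))
    fix w assume "w \<in> tt_of_s ` S"
    then obtain z where z: "z \<in> S" "w = tt_of_s z" by blast
    show "PVI_regular w (g w)" using z S(3) g(2) by (auto simp: Picard_transform_domain_def)
    show "deriv (deriv g) w = PVI_rhs 0 0 0 (1/2) w (g w) (deriv g w)"
      unfolding z(2) by (rule Picard_transform_solves[OF sol S(1,3) z(1) S(4) g(1) subset_refl g(2)])
  qed
  then show ?thesis using S(1-3) g(2) by (auto simp: Picard_transform_domain_def)
qed

end
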